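(* Let $\bar u=(u_\beta)_{\beta<\alpha}$ be a densely non-increasing sequence of elements of a linear order $(U,<)$ whose range $\{u_\beta\mid\beta<\alpha\}$ is infinite. Then $\bar u$ can be uniquely factorized as a concatenation $\bar u=\bar v\bar w$ of sequences where the length $\gamma$ of $\bar v$ is a limit ordinal, $\bar v$ is not ultimately constant in $\gamma$, and the range of $\bar w$ is finite.
   Context: Sequences are indexed by countable ordinals; the concatenation $\bar v\bar w$ of $(v_\beta)_{\beta<\gamma}$ and $(w_\beta)_{\beta<\delta}$ is the sequence of length $\gamma+\delta$ equal to $v_\beta$ at $\beta<\gamma$ and to $w_{\beta'}$ at $\gamma+\beta'$. A sequence $(u_\beta)_{\beta<\alpha}$ is constant on $[\gamma,\gamma')$ if $u_\beta=u_\gamma$ for all $\gamma\le\beta<\gamma'$; it is densely non-increasing if for all $\gamma<\gamma'\le\alpha$, either it is constant on $[\gamma,\gamma')$ or there exist $\gamma\le\beta<\beta'<\gamma'$ with $u_\beta>u_{\beta'}$. For a limit ordinal $\gamma\le\alpha$, it is ultimately constant in $\gamma$ if there is $\gamma'<\gamma$ such that it is constant on $[\gamma',\gamma)$. The range of a sequence is the set of its values. *)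

theory Defs
  imports Main "HOL-Library.Countable_Set"
begin

text \<open>Ordinals are modelled as elements of an arbitrary well-ordered type 'i:
  a sequence of length alpha is a function u :: 'i \<Rightarrow> 'u, of which only
  the values on {..<alpha} matter.\<close>

definition const_on :: "('i::wellorder \<Rightarrow> 'u) \<Rightarrow> 'i \<Rightarrow> 'i \<Rightarrow> bool" where
  "const_on u g g' \<longleftrightarrow> (\<forall>b. g \<le> b \<and> b < g' \<longrightarrow> u b = u g)"

definition densely_nonincr :: "('i::wellorder \<Rightarrow> 'u::linorder) \<Rightarrow> 'i \<Rightarrow> bool" where
  "densely_nonincr u a \<longleftrightarrow>
     (\<forall>g g'. g < g' \<and> g' \<le> a \<longrightarrow>
        const_on u g g' \<or> (\<exists>b b'. g \<le> b \<and> b < b' \<and> b' < g' \<and> u b > u b'))"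

definition limit_ord :: "'i::wellorder \<Rightarrow> bool" where
  "limit_ord g \<longleftrightarrow> (\<exists>b. b < g) \<and> (\<forall>b. b < g \<longrightarrow> (\<exists>b'. b < b' \<and> b' < g))"

definition ult_const :: "('i::wellorder \<Rightarrow> 'u) \<Rightarrow> 'i \<Rightarrow> bool" where
  "ult_const u g \<longleftrightarrow> (\<exists>g'. g' < g \<and> const_on u g' g)"

text \<open>A factorization u = v w with v of length g is determined by the split
  point g \<le> a: v is u restricted to {..<g}, and w is u restricted to the
  interval {g..<a} (re-indexed by its order type).\<close>

definition good_split :: "('i::wellorder \<Rightarrow> 'u) \<Rightarrow> 'i \<Rightarrow> 'i \<Rightarrow> bool" where
  "good_split u a g \<longleftrightarrow> g \<le> a \<and> limit_ord g \<and> \<not> ult_const u g \<and> finite (u ` {g..<a})"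

end

theory Submission
  imports Defs
begin

lemma finite_tail_image_extend:
  assumes "const_on u g' g" and "g' \<le> g" and "finite (u ` {g..<a})"
  shows "finite (u ` {g'..<a})"
proof -
  have "u ` {g'..<a} \<subseteq> insert (u g') (u ` {g..<a})"
    using assms(1) by (force simp: const_on_def not_less)
  then show ?thesis
    using assms(3) finite_subset by blast
qed

lemma limit_ord_if_not_ult_const:
  fixes g :: "'i::wellorder"
  assumes "b < g" and "\<not> ult_const u g"
  shows "limit_ord g"
  unfolding limit_ord_def
proof (intro conjI allI impI)
  show "\<exists>b. b < g" using assms(1) by blast
next
  fix c assume "c < g"
  show "\<exists>c'. c < c' \<and> c' < g"
  proof (rule ccontr)
    assume "\<nexists>c'. c < c' \<and> c' < g"
    then have "const_on u c g"
      by (auto simp: const_on_def order.order_iff_strict)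
    with \<open>c < g\<close> assms(2) show False
      by (auto simp: ult_const_def)
  qed
qed

lemma good_split_Least_finite_tail:
  fixes u :: "'i::wellorder \<Rightarrow> 'u" and a :: 'i
  assumes "infinite (u ` {..<a})"
  shows "good_split u a (LEAST g. g \<le> a \<and> finite (u ` {g..<a}))"
    (is "good_split u a ?g")
proof -
  let ?P = "\<lambda>g. g \<le> a \<and> finite (u ` {g..<a})"
  have P: "?P ?g"
    by (rule LeastI[of ?P a]) simp
  have not_P: "\<not> ?P g'" if "g' < ?g" for g'
    using that by (rule not_less_Least)
  have not_ult_const: "\<not> ult_const u ?g"
  proof
    assume "ult_const u ?g"
    then obtain g' where "g' < ?g" "const_on u g' ?g"
      by (auto simp: ult_const_def)
    then show False
      using not_P[of g'] P finite_tail_image_extend[of u g' ?g a] by auto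
  qed
  have "\<exists>b. b < ?g"
  proof (rule ccontr)
    assume "\<nexists>b. b < ?g"
    then have "u ` {..<a} \<subseteq> u ` {?g..<a}"
      by (auto simp: not_less)
    with P assms show False
      using finite_subset by blast
  qed
  then have "limit_ord ?g"
    using not_ult_const limit_ord_if_not_ult_const by blast
  with P not_ult_const show ?thesis
    unfolding good_split_def by blast
qed

lemma ex_successor:
  fixes q :: "'i::wellorder"
  assumes "q < a"
  shows "\<exists>s. q < s \<and> s \<le> a \<and> (\<forall>b<s. b \<le> q)"
proof (intro exI conjI allI impI)
  show "q < (LEAST s. q < s)" "(LEAST s. q < s) \<le> a"
    using assms by (auto intro: LeastI Least_le)
  show "b \<le> q" if "b < (LEAST s. q < s)" for b
    using not_less_Least[OF that] by simp
qed

lemma densely_nonincr_le_after_const: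
  fixes u :: "'i::wellorder \<Rightarrow> 'u::linorder"
  assumes dn: "densely_nonincr u a" and "p \<le> q" "q < a" and const: "const_on u p q"
  shows "u q \<le> u p"
proof -
  obtain s where s: "q < s" "s \<le> a" "\<forall>b<s. b \<le> q"
    using ex_successor[OF \<open>q < a\<close>] by blast
  have "p < s" using \<open>p \<le> q\<close> s(1) by simp
  then have "const_on u p s \<or> (\<exists>b b'. p \<le> b \<and> b < b' \<and> b' < s \<and> u b > u b')"
    using dn s(2) unfolding densely_nonincr_def by blast
  then show ?thesis
  proof (elim disjE exE conjE)
    assume "const_on u p s"
    then have "u q = u p" using s(1) \<open>p \<le> q\<close> unfolding const_on_def by blast
    then show ?thesis by simp
  next
    fix b b' assume b: "p \<le> b" "b < b'" "b' < s" "u b > u b'"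
    have "b' \<le> q" using s(3) \<open>b' < s\<close> by blast
    have "u b = u p"
      using const b(1) less_le_trans[OF b(2) \<open>b' \<le> q\<close>] unfolding const_on_def by blast
    moreover have "b' = q"
    proof (rule ccontr)
      assume "b' \<noteq> q"
      with \<open>b' \<le> q\<close> have "b' < q" by simp
      moreover have "p \<le> b'" using b(1,2) by simp
      ultimately have "u b' = u p"
        using const unfolding const_on_def by blast
      with \<open>u b = u p\<close> b(4) show False by simp
    qed
    ultimately show ?thesis using b(4) by simp
  qed
qed

lemma densely_nonincr_const_after_min:
  fixes u :: "'i::wellorder \<Rightarrow> 'u::linorder"
  assumes dn: "densely_nonincr u a" and "g \<le> a"
    and min: "\<And>b. p \<le> b \<Longrightarrow> b < g \<Longrightarrow> u p \<le> u b"
  shows "const_on u p g"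
proof (rule ccontr)
  let ?Q = "\<lambda>q. p \<le> q \<and> q < g \<and> u q \<noteq> u p"
  define q where "q = (LEAST q. ?Q q)"
  assume "\<not> const_on u p g"
  then have "\<exists>q. ?Q q" by (auto simp: const_on_def)
  then have Q: "?Q q" unfolding q_def by (rule LeastI_ex)
  have "const_on u p q"
    unfolding const_on_def
  proof (intro allI impI)
    fix b assume b: "p \<le> b \<and> b < q"
    then have "\<not> ?Q b" unfolding q_def using not_less_Least by blast
    moreover have "b < g" using b Q less_trans by blast
    ultimately show "u b = u p" using b by blast
  qed
  moreover have "q < a" using Q \<open>g \<le> a\<close> less_le_trans by blast
  ultimately have "u q \<le> u p"
    using densely_nonincr_le_after_const[OF dn] Q by blast
  with min[of q] Q show False by simp
qed

lemma densely_nonincr_finite_range_ult_const: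
  fixes u :: "'i::wellorder \<Rightarrow> 'u::linorder"
  assumes dn: "densely_nonincr u a" and "g1 < g2" "g2 \<le> a"
    and fin: "finite (u ` {g1..<g2})"
  shows "ult_const u g2"
proof -
  have "Min (u ` {g1..<g2}) \<in> u ` {g1..<g2}"
    using fin \<open>g1 < g2\<close> by (intro Min_in) auto
  then obtain p where p: "g1 \<le> p" "p < g2" "u p = Min (u ` {g1..<g2})"
    by auto
  have "const_on u p g2"
    using dn \<open>g2 \<le> a\<close> by (rule densely_nonincr_const_after_min) (use fin p in auto)
  with p(2) show ?thesis by (auto simp: ult_const_def)
qed

lemma good_split_unique:
  fixes u :: "'i::wellorder \<Rightarrow> 'u::linorder"
  assumes "densely_nonincr u a" "good_split u a g1" "good_split u a g2" "g1 \<le> g2"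
  shows "g1 = g2"
proof (rule ccontr)
  assume "g1 \<noteq> g2"
  with assms(4) have "g1 < g2" by simp
  moreover have "finite (u ` {g1..<g2})"
  proof (rule finite_subset)
    show "finite (u ` {g1..<a})" using assms(2) by (simp add: good_split_def)
    show "u ` {g1..<g2} \<subseteq> u ` {g1..<a}" using assms(3) by (auto simp: good_split_def)
  qed
  ultimately show False
    using densely_nonincr_finite_range_ult_const[OF assms(1)] assms(3)
    by (auto simp: good_split_def)
qed

theorem mainTheorem14:
  fixes u :: "'i::wellorder \<Rightarrow> 'u::linorder" and a :: 'i
  assumes "countable {..<a}"
    and "densely_nonincr u a"
    and "infinite (u ` {..<a})"
  shows "\<exists>!g. good_split u a g"
proof
  show "good_split u a (LEAST g. g \<le> a \<and> finite (u ` {g..<a}))"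
    using assms(3) by (rule good_split_Least_finite_tail)
next
  fix g assume "good_split u a g"
  with good_split_Least_finite_tail[OF assms(3)] good_split_unique[OF assms(2)]
  show "g = (LEAST g. g \<le> a \<and> finite (u ` {g..<a}))"
    by (metis linorder_le_cases)
qed

end
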